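(* Let $R$ be a discrete valuation ring with maximal ideal $\mathfrak m$, fraction field $F$ and valuation $\mathrm{ord}$. For integers $m\ge1$, $n\ge1$ let $K^M_n(F,m)$ be the subgroup of $K^M_n(F)$ generated by the Milnor symbols $\{y_1,\dots,y_n\}$ ($y_i\in F^\times$) with $\sum_{i=1}^n\mathrm{ord}(y_i-1)\ge m$. Then for every $n\ge0$, $$K^M_{n+1}(F,m)\subseteq(1+\mathfrak m^m)K^M_n(F).$$
   Context: $(1+\mathfrak m^m)K^M_n(F)$ denotes the subgroup of $K^M_{n+1}(F)$ generated by the products $\{u\}\cdot x$ with $u\in 1+\mathfrak m^m$ and $x\in K^M_n(F)$; for $n=0$ it is the image of $1+\mathfrak m^m$ in $K^M_1(F)=F^\times$. Convention $\mathrm{ord}(0)=\infty$. *)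

theory Defs
  imports Complex_Main "HOL-Library.Extended_Real"
begin

text \<open>A normalized discrete valuation v on the field F (values on nonzero elements;
 v 0 is irrelevant). Its valuation ring R = {0} \<union> {x. v x \<ge> 0} is a DVR with
 fraction field F and maximal ideal {0} \<union> {x. v x \<ge> 1}; every DVR arises so.\<close>

definition discrete_valuation :: "('a::field \<Rightarrow> int) \<Rightarrow> bool" where
  "discrete_valuation v \<longleftrightarrow>
     (\<forall>x y. x \<noteq> 0 \<longrightarrow> y \<noteq> 0 \<longrightarrow> v (x * y) = v x + v y) \<and>
     (\<forall>x y. x \<noteq> 0 \<longrightarrow> y \<noteq> 0 \<longrightarrow> x + y \<noteq> 0 \<longrightarrow> v (x + y) \<ge> min (v x) (v y)) \<and>
     (\<forall>k. \<exists>x. x \<noteq> 0 \<and> v x = k)"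

definition ord :: "('a::field \<Rightarrow> int) \<Rightarrow> 'a \<Rightarrow> ereal" where
  "ord v x = (if x = 0 then \<infinity> else ereal (of_int (v x)))"

definition one_plus_mpow :: "('a::field \<Rightarrow> int) \<Rightarrow> nat \<Rightarrow> 'a set" where
  "one_plus_mpow v m = {u. u \<noteq> 0 \<and> ord v (u - 1) \<ge> ereal (real m)}"

text \<open>Elements of the free abelian group on words (lists) over F are integer-valued
 functions on lists. zspan S is the subgroup generated by S.\<close>

inductive_set zspan :: "('b \<Rightarrow> int) set \<Rightarrow> ('b \<Rightarrow> int) set" for S where
  zero: "(\<lambda>_. 0) \<in> zspan S"
| add: "f \<in> zspan S \<Longrightarrow> s \<in> S \<Longrightarrow> (\<lambda>l. f l + s l) \<in> zspan S"
| diff: "f \<in> zspan S \<Longrightarrow> s \<in> S \<Longrightarrow> (\<lambda>l. f l - s l) \<in> zspan S"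

definition delta :: "'a list \<Rightarrow> ('a list \<Rightarrow> int)" where
  "delta xs = (\<lambda>l. if l = xs then 1 else 0)"

definition units_words :: "nat \<Rightarrow> ('a::field) list set" where
  "units_words n = {xs. length xs = n \<and> (\<forall>x\<in>set xs. x \<noteq> 0)}"

text \<open>Free abelian group on (F^\<times>)^n (this is (F^\<times>)^{\<otimes>n} before imposing
 multilinearity).\<close>
definition free_words :: "nat \<Rightarrow> (('a::field) list \<Rightarrow> int) set" where
  "free_words n = zspan (delta ` units_words n)"

text \<open>Relations defining K^M_n(F) = (F^\<times>)^{\<otimes>n} / (Steinberg): multilinearity in
 each slot, and Steinberg relations a \<otimes> (1-a) in adjacent slots.\<close>
definition milnor_rels :: "nat \<Rightarrow> (('a::field) list \<Rightarrow> int) set" where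
  "milnor_rels n =
     {(\<lambda>l. delta (xs @ [a * b] @ ys) l - delta (xs @ [a] @ ys) l - delta (xs @ [b] @ ys) l)
        | xs ys a b. xs @ [a] @ ys \<in> units_words n \<and> b \<noteq> 0}
   \<union> {delta (xs @ [a, 1 - a] @ ys) | xs ys a. xs @ [a, 1 - a] @ ys \<in> units_words n}"

text \<open>A subgroup H of K^M_n(F) given by generators S (words/elements of the free group)
 corresponds to its preimage zspan (milnor_rels n \<union> S) in the free group; inclusion of
 subgroups of K^M_n(F) is inclusion of these preimages.\<close>

text \<open>Product {u}\<cdot>x for x \<in> K^M_n(F) represented by g: represented by u prepended to
 every word (well defined on the quotient since prepending maps relations to relations).\<close>
definition sym_mult :: "'a \<Rightarrow> ('a list \<Rightarrow> int) \<Rightarrow> ('a list \<Rightarrow> int)" where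
  "sym_mult u g = (\<lambda>l. case l of [] \<Rightarrow> 0 | w # ws \<Rightarrow> (if w = u then g ws else 0))"

definition KM_m_gens :: "('a::field \<Rightarrow> int) \<Rightarrow> nat \<Rightarrow> nat \<Rightarrow> ('a list \<Rightarrow> int) set" where
  "KM_m_gens v n m = {delta ys | ys. ys \<in> units_words n \<and>
       sum_list (map (\<lambda>y. ord v (y - 1)) ys) \<ge> ereal (real m)}"

definition one_plus_mpow_K_gens :: "('a::field \<Rightarrow> int) \<Rightarrow> nat \<Rightarrow> nat \<Rightarrow> ('a list \<Rightarrow> int) set" where
  "one_plus_mpow_K_gens v m n = {sym_mult u g | u g. u \<in> one_plus_mpow v m \<and> g \<in> free_words n}"

end

theory Submission
  imports Defs "HOL-Library.Function_Algebras"
begin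

text \<open>For units u, u' with ord (u - 1), ord (u' - 1) \<ge> 1 put r = u + u' - u u'. Then
  r - 1 = -(u - 1)(u' - 1) has valuation ord (u - 1) + ord (u' - 1), and the Steinberg
  relation for u / r (note 1 - u / r = (1 - u) u' / r) gives {u, u'} = {r, (1 - u) u' / (u r)}.
  Entries y with ord (y - 1) \<le> 0 only lower the sum, so the remaining entries have
  valuations summing to at least m; merging them pairwise leaves a single entry of 1 + m^m.
  Since permuting entries changes a symbol only up to sign, that entry can be brought to the
  front, exhibiting the symbol as an element of (1 + m^m) K^M_n(F).\<close>

lemma zspan_generator: "s \<in> S \<Longrightarrow> s \<in> zspan S"
  using zspan.add[OF zspan.zero, of s S] by simp

lemma zspan_add: "g \<in> zspan S \<Longrightarrow> f \<in> zspan S \<Longrightarrow> f + g \<in> zspan S"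
proof (induction g rule: zspan.induct)
  case zero
  then show ?case by (simp add: plus_fun_def)
next
  case (add g s)
  have "f + (\<lambda>l. g l + s l) = (\<lambda>l. (f + g) l + s l)" by (simp add: plus_fun_def add.assoc)
  then show ?case using zspan.add[OF add.IH[OF add.prems] add.hyps(2)] by simp
next
  case (diff g s)
  have "f + (\<lambda>l. g l - s l) = (\<lambda>l. (f + g) l - s l)" by (simp add: plus_fun_def add_diff_eq)
  then show ?case using zspan.diff[OF diff.IH[OF diff.prems] diff.hyps(2)] by simp
qed

lemma zspan_uminus: "f \<in> zspan S \<Longrightarrow> - f \<in> zspan S"
proof (induction f rule: zspan.induct)
  case zero
  then show ?case using zspan.zero by (simp add: fun_Compl_def)
next
  case (add g s)
  have "- (\<lambda>l. g l + s l) = (\<lambda>l. (- g) l - s l)" by (simp add: fun_eq_iff)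
  then show ?case using zspan.diff[OF add.IH add.hyps(2)] by simp
next
  case (diff g s)
  have "- (\<lambda>l. g l - s l) = (\<lambda>l. (- g) l + s l)" by (simp add: fun_eq_iff)
  then show ?case using zspan.add[OF diff.IH diff.hyps(2)] by simp
qed

lemma zspan_diff: "f \<in> zspan S \<Longrightarrow> g \<in> zspan S \<Longrightarrow> f - g \<in> zspan S"
  using zspan_add[OF zspan_uminus, of g S f] by simp

lemmas zspan_closed = zspan_add zspan_diff zspan_uminus

lemma zspan_subset_zspan: "(\<And>s. s \<in> S \<Longrightarrow> s \<in> zspan T) \<Longrightarrow> zspan S \<subseteq> zspan T"
proof
  fix f assume gen: "\<And>s. s \<in> S \<Longrightarrow> s \<in> zspan T" and f: "f \<in> zspan S"
  from f show "f \<in> zspan T"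
  proof (induction f rule: zspan.induct)
    case zero
    show ?case by (rule zspan.zero)
  next
    case (add f s)
    then show ?case using zspan_add[of s T f] gen[of s] by (simp add: plus_fun_def)
  next
    case (diff f s)
    then show ?case using zspan_diff[of f T s] gen[of s] by (simp add: fun_diff_def)
  qed
qed

lemma zspan_mono: "S \<subseteq> T \<Longrightarrow> zspan S \<subseteq> zspan T"
  by (rule zspan_subset_zspan) (auto intro: zspan_generator)

lemma zspan_Un_left: "f \<in> zspan S \<Longrightarrow> f \<in> zspan (S \<union> T)"
  using zspan_mono[of S "S \<union> T"] by blast

locale adjacent_slots =
  fixes N :: nat and pre post :: "'a::field list"
  assumes length_eq: "length pre + 2 + length post = N"
    and pre_nonzero: "0 \<notin> set pre" and post_nonzero: "0 \<notin> set post"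
begin

abbreviation relations :: "('a list \<Rightarrow> int) set" where
  "relations \<equiv> zspan (milnor_rels N)"

definition symbol :: "'a \<Rightarrow> 'a \<Rightarrow> 'a list \<Rightarrow> int" where
  "symbol x y = delta (pre @ [x, y] @ post)"

lemma units_word: "x \<noteq> 0 \<Longrightarrow> y \<noteq> 0 \<Longrightarrow> pre @ [x, y] @ post \<in> units_words N"
  using length_eq pre_nonzero post_nonzero by (auto simp: units_words_def)

lemma symbol_mult_left:
  assumes "x \<noteq> 0" "x' \<noteq> 0" "y \<noteq> 0"
  shows "symbol (x * x') y - symbol x y - symbol x' y \<in> relations"
proof -
  have "(\<lambda>l. delta (pre @ [x * x'] @ (y # post)) l - delta (pre @ [x] @ (y # post)) l
          - delta (pre @ [x'] @ (y # post)) l) \<in> milnor_rels N"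
    unfolding milnor_rels_def using units_word[of x y] assms by fastforce
  then show ?thesis unfolding symbol_def by (simp add: fun_diff_def zspan_generator)
qed

lemma symbol_mult_right:
  assumes "x \<noteq> 0" "y \<noteq> 0" "y' \<noteq> 0"
  shows "symbol x (y * y') - symbol x y - symbol x y' \<in> relations"
proof -
  have "(\<lambda>l. delta ((pre @ [x]) @ [y * y'] @ post) l - delta ((pre @ [x]) @ [y] @ post) l
          - delta ((pre @ [x]) @ [y'] @ post) l) \<in> milnor_rels N"
    unfolding milnor_rels_def using units_word[of x y] assms by fastforce
  then show ?thesis unfolding symbol_def by (simp add: fun_diff_def zspan_generator)
qed

lemma symbol_steinberg:
  assumes "x \<noteq> 0" "x \<noteq> 1"
  shows "symbol x (1 - x) \<in> relations"
proof -
  have "delta (pre @ [x, 1 - x] @ post) \<in> milnor_rels N"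
    unfolding milnor_rels_def using units_word[of x "1 - x"] assms by fastforce
  then show ?thesis by (auto simp: symbol_def intro: zspan_generator)
qed

lemma symbol_one_left: "y \<noteq> 0 \<Longrightarrow> symbol 1 y \<in> relations"
  using zspan_uminus[OF symbol_mult_left[of 1 1 y]] by simp

lemma symbol_one_right: "x \<noteq> 0 \<Longrightarrow> symbol x 1 \<in> relations"
  using zspan_uminus[OF symbol_mult_right[of x 1 1]] by simp

lemma symbol_inverse_left:
  assumes "x \<noteq> 0" "y \<noteq> 0"
  shows "symbol (inverse x) y + symbol x y \<in> relations"
proof -
  have "symbol (inverse x) y + symbol x y
      = symbol 1 y - (symbol (x * inverse x) y - symbol x y - symbol (inverse x) y)"
    using assms by simp
  with assms symbol_one_left symbol_mult_left[of x "inverse x" y] show ?thesis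
    by (metis inverse_nonzero_iff_nonzero zspan_diff)
qed

lemma symbol_inverse_right:
  assumes "x \<noteq> 0" "y \<noteq> 0"
  shows "symbol x (inverse y) + symbol x y \<in> relations"
proof -
  have "symbol x (inverse y) + symbol x y
      = symbol x 1 - (symbol x (y * inverse y) - symbol x y - symbol x (inverse y))"
    using assms by simp
  with assms symbol_one_right symbol_mult_right[of x y "inverse y"] show ?thesis
    by (metis inverse_nonzero_iff_nonzero zspan_diff)
qed

lemma symbol_divide_left:
  assumes "x \<noteq> 0" "x' \<noteq> 0" "y \<noteq> 0"
  shows "symbol (x / x') y - symbol x y + symbol x' y \<in> relations"
proof -
  have "symbol (x / x') y - symbol x y + symbol x' y
     = (symbol (x * inverse x') y - symbol x y - symbol (inverse x') y)
       + (symbol (inverse x') y + symbol x' y)"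
    by (simp add: divide_inverse)
  with assms symbol_mult_left[of x "inverse x'" y] symbol_inverse_left[of x' y] show ?thesis
    by (metis inverse_nonzero_iff_nonzero zspan_add)
qed

lemma symbol_divide_right:
  assumes "x \<noteq> 0" "y \<noteq> 0" "y' \<noteq> 0"
  shows "symbol x (y / y') - symbol x y + symbol x y' \<in> relations"
proof -
  have "symbol x (y / y') - symbol x y + symbol x y'
     = (symbol x (y * inverse y') - symbol x y - symbol x (inverse y'))
       + (symbol x (inverse y') + symbol x y')"
    by (simp add: divide_inverse)
  with assms symbol_mult_right[of x y "inverse y'"] symbol_inverse_right[of x y'] show ?thesis
    by (metis inverse_nonzero_iff_nonzero zspan_add)
qed

lemma symbol_minus_self:
  assumes x: "x \<noteq> 0"
  shows "symbol x (- x) \<in> relations"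
proof (cases "x = 1")
  case True
  then show ?thesis using symbol_one_left[of "-1"] by simp
next
  case False
  have ix: "inverse x \<noteq> 0" "inverse x \<noteq> 1"
    using False x by (auto simp: inverse_eq_1_iff)
  have nz: "1 - x \<noteq> 0" "1 - inverse x \<noteq> 0" using False ix by auto
  have "- x = (1 - x) / (1 - inverse x)"
    using False x by (simp add: field_simps)
  then have eq: "symbol x (- x)
      = (symbol x ((1 - x) / (1 - inverse x)) - symbol x (1 - x) + symbol x (1 - inverse x))
        + symbol x (1 - x)
        - (symbol (inverse x) (1 - inverse x) + symbol x (1 - inverse x))
        + symbol (inverse x) (1 - inverse x)"
    by simp
  have rels:
    "symbol x ((1 - x) / (1 - inverse x)) - symbol x (1 - x) + symbol x (1 - inverse x)
       \<in> relations"
    "symbol x (1 - x) \<in> relations"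
    "symbol (inverse x) (1 - inverse x) + symbol x (1 - inverse x) \<in> relations"
    "symbol (inverse x) (1 - inverse x) \<in> relations"
    using x False ix nz
    by (simp_all add: symbol_divide_right symbol_steinberg symbol_inverse_left)
  show ?thesis unfolding eq by (intro rels zspan_closed)
qed

lemma symbol_antisym:
  assumes x: "x \<noteq> 0" and y: "y \<noteq> 0"
  shows "symbol x y + symbol y x \<in> relations"
proof -
  have eq: "symbol x y + symbol y x = symbol (x * y) (- (x * y))
      - (symbol (x * y) (- (x * y)) - symbol x (- (x * y)) - symbol y (- (x * y)))
      - (symbol x (- x * y) - symbol x (- x) - symbol x y)
      - (symbol y (- y * x) - symbol y (- y) - symbol y x)
      - symbol x (- x) - symbol y (- y)"
    by (simp add: algebra_simps)
  have rels:
    "symbol (x * y) (- (x * y)) \<in> relations"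
    "symbol (x * y) (- (x * y)) - symbol x (- (x * y)) - symbol y (- (x * y)) \<in> relations"
    "symbol x (- x * y) - symbol x (- x) - symbol x y \<in> relations"
    "symbol y (- y * x) - symbol y (- y) - symbol y x \<in> relations"
    "symbol x (- x) \<in> relations" "symbol y (- y) \<in> relations"
    using x y symbol_mult_right[of x "- x" y] symbol_mult_right[of y "- y" x]
    by (simp_all add: symbol_minus_self symbol_mult_left)
  show ?thesis unfolding eq by (intro rels zspan_closed)
qed

lemma symbol_merge:
  assumes p0: "p \<noteq> 0" and p1: "p \<noteq> 1" and q0: "q \<noteq> 0" and r0: "r \<noteq> 0"
    and r_def: "r = p + q - p * q"
  shows "symbol p q - symbol r ((1 - p) * q / (p * r)) \<in> relations"
proof -
  define y where "y = (1 - p) * q / r"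
  define c where "c = (1 - p) * q / (p * r)"
  have pq0: "(1 - p) * q \<noteq> 0" using p1 q0 by simp
  have y0: "y \<noteq> 0" using pq0 r0 by (simp add: y_def)
  have "r - p = (1 - p) * q" using r_def by (simp add: algebra_simps)
  then have one_minus: "1 - p / r = y"
    using r0 by (simp add: y_def field_simps)
  have pr0: "p / r \<noteq> 0" using p0 r0 by simp
  have pr1: "p / r \<noteq> 1" using one_minus y0 by auto
  have eq: "symbol p q - symbol r c = symbol (p / r) y
     - (symbol (p / r) y - symbol p y + symbol r y)
     - (symbol p y - symbol p ((1 - p) * q) + symbol p r)
     - (symbol p ((1 - p) * q) - symbol p (1 - p) - symbol p q)
     - symbol p (1 - p)
     + (symbol r y - symbol r ((1 - p) * q) + symbol r r)
     - (symbol r c - symbol r ((1 - p) * q) + symbol r (p * r))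
     + (symbol r (p * r) - symbol r p - symbol r r)
     + (symbol p r + symbol r p)"
    by (simp add: algebra_simps)
  have rels:
    "symbol (p / r) y \<in> relations"
    "symbol (p / r) y - symbol p y + symbol r y \<in> relations"
    "symbol p y - symbol p ((1 - p) * q) + symbol p r \<in> relations"
    "symbol p ((1 - p) * q) - symbol p (1 - p) - symbol p q \<in> relations"
    "symbol p (1 - p) \<in> relations"
    "symbol r y - symbol r ((1 - p) * q) + symbol r r \<in> relations"
    "symbol r c - symbol r ((1 - p) * q) + symbol r (p * r) \<in> relations"
    "symbol r (p * r) - symbol r p - symbol r r \<in> relations"
    "symbol p r + symbol r p \<in> relations"
    using symbol_steinberg[OF pr0 pr1] one_minus p0 p1 q0 r0 pq0 y0 unfolding y_def c_def
    by (simp_all add: symbol_divide_left symbol_divide_right symbol_mult_right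
        symbol_steinberg symbol_antisym)
  have "symbol p q - symbol r c \<in> relations" unfolding eq by (intro rels zspan_closed)
  then show ?thesis by (simp add: c_def)
qed

end

lemma adjacent_slotsI: "pre @ [a, b] @ post \<in> units_words N \<Longrightarrow> adjacent_slots N pre post"
  unfolding adjacent_slots_def units_words_def by auto

lemma delta_swap_adjacent:
  assumes u: "pre @ [a, b] @ post \<in> units_words N"
    and ab: "delta (pre @ [a, b] @ post) \<in> zspan (milnor_rels N \<union> X)"
  shows "delta (pre @ [b, a] @ post) \<in> zspan (milnor_rels N \<union> X)"
proof -
  interpret adjacent_slots N pre post using adjacent_slotsI[OF u] .
  have "a \<noteq> 0" "b \<noteq> 0" using u by (auto simp: units_words_def)
  then have "symbol a b + symbol b a \<in> zspan (milnor_rels N \<union> X)"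
    by (intro zspan_Un_left symbol_antisym)
  then have "(symbol a b + symbol b a) - symbol a b \<in> zspan (milnor_rels N \<union> X)"
    using ab by (intro zspan_diff) (auto simp: symbol_def)
  then show ?thesis by (simp add: symbol_def)
qed

lemma delta_swap_adjacent_iff:
  assumes "pre @ [a, b] @ post \<in> units_words N"
  shows "delta (pre @ [a, b] @ post) \<in> zspan (milnor_rels N \<union> X) \<longleftrightarrow>
         delta (pre @ [b, a] @ post) \<in> zspan (milnor_rels N \<union> X)"
proof -
  have "pre @ [b, a] @ post \<in> units_words N" using assms by (auto simp: units_words_def)
  then show ?thesis using delta_swap_adjacent assms by blast
qed

lemma delta_move_iff:
  "pre @ xs @ a # zs \<in> units_words N \<Longrightarrow>
   delta (pre @ a # xs @ zs) \<in> zspan (milnor_rels N \<union> X) \<longleftrightarrow>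
   delta (pre @ xs @ a # zs) \<in> zspan (milnor_rels N \<union> X)"
proof (induction xs arbitrary: pre)
  case Nil
  then show ?case by simp
next
  case (Cons x xs)
  have "pre @ [a, x] @ (xs @ zs) \<in> units_words N"
    using Cons.prems by (auto simp: units_words_def)
  then have "delta (pre @ a # (x # xs) @ zs) \<in> zspan (milnor_rels N \<union> X) \<longleftrightarrow>
        delta ((pre @ [x]) @ a # xs @ zs) \<in> zspan (milnor_rels N \<union> X)"
    using delta_swap_adjacent_iff by fastforce
  also have "\<dots> \<longleftrightarrow> delta ((pre @ [x]) @ xs @ a # zs) \<in> zspan (milnor_rels N \<union> X)"
    using Cons.IH[of "pre @ [x]"] Cons.prems by simp
  finally show ?case by simp
qed

lemma delta_filter_partition:
  "pre @ ys \<in> units_words N \<Longrightarrow>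
   delta (pre @ filter Q ys @ filter (\<lambda>y. \<not> Q y) ys) \<in> zspan (milnor_rels N \<union> X) \<Longrightarrow>
   delta (pre @ ys) \<in> zspan (milnor_rels N \<union> X)"
proof (induction ys arbitrary: pre)
  case Nil
  then show ?case by simp
next
  case (Cons y ys)
  have "delta ((pre @ [y]) @ filter Q ys @ filter (\<lambda>y. \<not> Q y) ys)
      \<in> zspan (milnor_rels N \<union> X)"
  proof (cases "Q y")
    case True
    then show ?thesis using Cons.prems(2) by simp
  next
    case False
    have "pre @ filter Q ys @ y # filter (\<lambda>y. \<not> Q y) ys \<in> units_words N"
      using Cons.prems(1) by (auto simp: units_words_def sum_length_filter_compl)
    then show ?thesis using delta_move_iff Cons.prems(2) False by fastforce
  qed
  then show ?case using Cons.IH[of "pre @ [y]"] Cons.prems(1) by simp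
qed

lemma delta_one_entry:
  assumes "xs @ [1] @ ys \<in> units_words N"
  shows "delta (xs @ [1] @ ys) \<in> zspan (milnor_rels N)"
proof -
  have "(\<lambda>l. delta (xs @ [1 * 1] @ ys) l - delta (xs @ [1] @ ys) l - delta (xs @ [1] @ ys) l)
          \<in> milnor_rels N"
    unfolding milnor_rels_def using assms by fastforce
  then have "- delta (xs @ [1] @ ys) \<in> zspan (milnor_rels N)"
    using zspan_generator by (fastforce simp: fun_Compl_def)
  from zspan_uminus[OF this] show ?thesis by simp
qed

lemma delta_Cons_one_plus_mpow:
  assumes "u \<in> one_plus_mpow v m" "ws \<in> units_words n"
  shows "delta (u # ws) \<in> zspan (milnor_rels (Suc n) \<union> one_plus_mpow_K_gens v m n)"
proof -
  have "delta (u # ws) = sym_mult u (delta ws)"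
    by (auto simp: fun_eq_iff sym_mult_def delta_def split: list.split)
  moreover have "delta ws \<in> free_words n"
    unfolding free_words_def using assms(2) by (auto intro: zspan_generator)
  ultimately have "delta (u # ws) \<in> one_plus_mpow_K_gens v m n"
    unfolding one_plus_mpow_K_gens_def using assms(1) by blast
  then show ?thesis by (auto intro: zspan_generator)
qed

lemma discrete_valuation_mult:
  "discrete_valuation v \<Longrightarrow> x \<noteq> 0 \<Longrightarrow> y \<noteq> 0 \<Longrightarrow> v (x * y) = v x + v y"
  unfolding discrete_valuation_def by blast

lemma discrete_valuation_one: "discrete_valuation v \<Longrightarrow> v 1 = 0"
  using discrete_valuation_mult[of v 1 1] by simp

lemma discrete_valuation_uminus:
  assumes dv: "discrete_valuation v" and x: "x \<noteq> 0"
  shows "v (- x) = v x"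
proof -
  have "v (-1) + v (-1) = 0"
    using discrete_valuation_mult[OF dv, of "-1" "-1"] discrete_valuation_one[OF dv] by simp
  then show ?thesis using discrete_valuation_mult[OF dv, of "-1" x] x by simp
qed

lemma discrete_valuation_merge:
  assumes dv: "discrete_valuation v" and "p \<noteq> 1" "q \<noteq> 1"
  shows "v (p + q - p * q - 1) = v (p - 1) + v (q - 1)"
proof -
  have "p + q - p * q - 1 = - ((p - 1) * (q - 1))" by (simp add: algebra_simps)
  then show ?thesis
    using assms discrete_valuation_uminus[OF dv] discrete_valuation_mult[OF dv] by simp
qed

lemma delta_merge_into_head:
  assumes dv: "discrete_valuation v"
  shows "\<forall>u\<in>set (p # us). u \<noteq> 1 \<and> 1 \<le> v (u - 1) \<Longrightarrow>
    int m \<le> (\<Sum>u\<leftarrow>p # us. v (u - 1)) \<Longrightarrow> p # us @ ws \<in> units_words (Suc n) \<Longrightarrow>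
    delta (p # us @ ws) \<in> zspan (milnor_rels (Suc n) \<union> one_plus_mpow_K_gens v m n)"
proof (induction us arbitrary: p ws)
  case Nil
  then have "p \<in> one_plus_mpow v m" "ws \<in> units_words n"
    by (auto simp: one_plus_mpow_def ord_def units_words_def)
  then show ?case by (simp add: delta_Cons_one_plus_mpow)
next
  case (Cons q us)
  have p: "p \<noteq> 0" "p \<noteq> 1" "1 \<le> v (p - 1)" and q: "q \<noteq> 0" "q \<noteq> 1" "1 \<le> v (q - 1)"
    using Cons.prems(1,3) by (auto simp: units_words_def)
  define r where "r = p + q - p * q"
  define c where "c = (1 - p) * q / (p * r)"
  have vr: "v (r - 1) = v (p - 1) + v (q - 1)"
    unfolding r_def using discrete_valuation_merge[OF dv p(2) q(2)] .
  have "r - 1 = - ((p - 1) * (q - 1))" by (simp add: r_def algebra_simps)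
  then have r1: "r \<noteq> 1" using p q by auto
  have r0: "r \<noteq> 0"
    using vr p q discrete_valuation_uminus[OF dv, of 1] discrete_valuation_one[OF dv] by force
  have c0: "c \<noteq> 0" using p q r0 by (simp add: c_def)
  have units: "r # us @ c # ws \<in> units_words (Suc n)"
    using Cons.prems(3) r0 c0 by (auto simp: units_words_def)
  have "delta (r # us @ c # ws) \<in> zspan (milnor_rels (Suc n) \<union> one_plus_mpow_K_gens v m n)"
    using Cons.IH[OF _ _ units] Cons.prems(1,2) r0 r1 vr by auto
  then have merged: "delta ([r, c] @ us @ ws)
      \<in> zspan (milnor_rels (Suc n) \<union> one_plus_mpow_K_gens v m n)"
    using delta_move_iff[of "[r]" us c ws] units by simp
  interpret adjacent_slots "Suc n" "[]" "us @ ws"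
    using adjacent_slotsI[of "[]" p q "us @ ws"] Cons.prems(3) by simp
  have "symbol p q - symbol r c \<in> zspan (milnor_rels (Suc n) \<union> one_plus_mpow_K_gens v m n)"
    unfolding c_def by (intro zspan_Un_left symbol_merge p q r0 r_def)
  then have "(symbol p q - symbol r c) + symbol r c
      \<in> zspan (milnor_rels (Suc n) \<union> one_plus_mpow_K_gens v m n)"
    using merged by (intro zspan_add) (simp_all add: symbol_def)
  then show ?case by (simp add: symbol_def)
qed

lemma sum_list_ord_eq:
  "1 \<notin> set ys \<Longrightarrow> (\<Sum>y\<leftarrow>ys. ord v (y - 1)) = ereal (real_of_int (\<Sum>y\<leftarrow>ys. v (y - 1)))"
  by (induction ys) (auto simp: ord_def)

lemma sum_list_le_sum_list_filter:
  "\<forall>y\<in>set ys. \<not> Q y \<longrightarrow> f y \<le> (0::int) \<Longrightarrow>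
   sum_list (map f ys) \<le> sum_list (map f (filter Q ys))"
  by (induction ys) auto

lemma delta_KM_m_gen:
  assumes dv: "discrete_valuation v" and m: "m \<ge> 1"
    and ys: "ys \<in> units_words (Suc n)"
    and sum_ord: "ereal (real m) \<le> (\<Sum>y\<leftarrow>ys. ord v (y - 1))"
  shows "delta ys \<in> zspan (milnor_rels (Suc n) \<union> one_plus_mpow_K_gens v m n)"
proof (cases "1 \<in> set ys")
  case True
  then obtain xs zs where "ys = xs @ [1] @ zs" by (metis append_Cons append_Nil split_list)
  then show ?thesis using delta_one_entry ys zspan_Un_left by metis
next
  case False
  define Q where "Q = (\<lambda>y. 1 \<le> v (y - 1))"
  have "int m \<le> (\<Sum>y\<leftarrow>ys. v (y - 1))"
    using sum_ord sum_list_ord_eq[OF False] by simp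
  also have "\<dots> \<le> (\<Sum>y\<leftarrow>filter Q ys. v (y - 1))"
    by (rule sum_list_le_sum_list_filter) (simp add: Q_def)
  finally have sum: "int m \<le> (\<Sum>y\<leftarrow>filter Q ys. v (y - 1))" .
  then obtain p us where pus: "filter Q ys = p # us" using m by (cases "filter Q ys") auto
  have "filter Q ys @ filter (\<lambda>y. \<not> Q y) ys \<in> units_words (Suc n)"
    using ys by (auto simp: units_words_def sum_length_filter_compl)
  moreover have "\<forall>u\<in>set (p # us). u \<noteq> 1 \<and> 1 \<le> v (u - 1)"
    using False pus[symmetric] by (auto simp: Q_def)
  ultimately have "delta ([] @ filter Q ys @ filter (\<lambda>y. \<not> Q y) ys)
      \<in> zspan (milnor_rels (Suc n) \<union> one_plus_mpow_K_gens v m n)"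
    using delta_merge_into_head[OF dv] sum pus by simp
  then show ?thesis using delta_filter_partition[of "[]" ys] ys by simp
qed

theorem lemma3p3:
  fixes v :: "'a::field \<Rightarrow> int" and m n :: nat
  assumes "discrete_valuation v" and "m \<ge> 1"
  shows "zspan (milnor_rels (Suc n) \<union> KM_m_gens v (Suc n) m)
           \<subseteq> zspan (milnor_rels (Suc n) \<union> one_plus_mpow_K_gens v m n)"
proof (rule zspan_subset_zspan)
  fix s assume "s \<in> milnor_rels (Suc n) \<union> KM_m_gens v (Suc n) m"
  then show "s \<in> zspan (milnor_rels (Suc n) \<union> one_plus_mpow_K_gens v m n)"
    using delta_KM_m_gen[OF assms] by (auto simp: KM_m_gens_def intro: zspan_generator)
qed

end
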